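(* If $(G,u,v)$ is a twice-marked graph of genus $g$ with $k$-general transmission and $k\ge \frac12 g+1$, then $G$ (forgetting the marked points) is Brill–Noether general.
   Context: A graph is a finite, connected, loopless multigraph (parallel edges allowed); its genus is $g=|E(G)|-|V(G)|+1$. A divisor is an element of the free abelian group on $V(G)$. Linear equivalence $\sim$ is generated by chip-firing (firing $w$ subtracts $\mathrm{val}(w)$ chips from $w$ and adds to each other vertex the number of edges joining it to $w$). The rank $r(D)$ is $-1$ if $D$ is not equivalent to an effective divisor, else the largest $r\ge0$ such that $D-E$ is equivalent to an effective divisor for every effective $E$ of degree $r$. $\delta(P)$ is $1$ if $P$ holds and $0$ otherwise. A twice-marked graph $(G,u,v)$ is a graph with two chosen vertices. A twist of $D$ is $D+au+bv$. $\Delta(D)=r(D)-r(D-u)-r(D-v)+r(D-u-v)$. $D$ is submodular if $\Delta(D')\ge0$ for all twists $D'$. If $D$ is submodular, its transmission permutation $\tau^{u,v}_D$ is the unique bijection $\mathbb Z\to\mathbb Z$ with $\delta(\tau^{u,v}_D(b)=a)=\Delta(D+au-bv)$ for all $a,b$. An inversion of a bijection $\tau$ is a pair $(a,b)$ with $a<b$, $\tau(a)>\tau(b)$; two inversions $(a,b),(a',b')$ are $k$-equivalent if $a-a'=b-b'\equiv0\pmod k$; $\mathrm{inv}_k(\tau)$ is the number of classes. A genus-$g$ twice-marked graph has $k$-general transmission if $ku\sim kv$, every divisor is submodular, and $\mathrm{inv}_k(\tau^{u,v}_D)\le g$ for every divisor $D$. A graph $G$ of genus $g$ is Brill–Noether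 general if for every divisor $D$ and every integer $r$ with $0\le r\le r(D)$, $g-(r+1)(g-\deg D+r)\ge0$. *)

theory Defs
  imports Main "HOL-Library.Extended_Nat"
begin

text \<open>A finite, connected, loopless multigraph with vertex set V and edge
multiplicity function m (m x y = number of edges joining x and y).\<close>

definition is_graph :: "'a set \<Rightarrow> ('a \<Rightarrow> 'a \<Rightarrow> nat) \<Rightarrow> bool" where
  "is_graph V m \<longleftrightarrow> finite V \<and> V \<noteq> {}
     \<and> (\<forall>x y. m x y = m y x)
     \<and> (\<forall>x. m x x = 0)
     \<and> (\<forall>x y. m x y > 0 \<longrightarrow> x \<in> V \<and> y \<in> V)
     \<and> (\<forall>x\<in>V. \<forall>y\<in>V. (x, y) \<in> {(a, b). m a b > 0}\<^sup>*)"

definition num_edges :: "'a set \<Rightarrow> ('a \<Rightarrow> 'a \<Rightarrow> nat) \<Rightarrow> int" where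
  "num_edges V m = int ((\<Sum>x\<in>V. \<Sum>y\<in>V. m x y) div 2)"

definition genus :: "'a set \<Rightarrow> ('a \<Rightarrow> 'a \<Rightarrow> nat) \<Rightarrow> int" where
  "genus V m = num_edges V m - int (card V) + 1"

definition valence :: "'a set \<Rightarrow> ('a \<Rightarrow> 'a \<Rightarrow> nat) \<Rightarrow> 'a \<Rightarrow> int" where
  "valence V m x = (\<Sum>y\<in>V. int (m x y))"

definition is_divisor :: "'a set \<Rightarrow> ('a \<Rightarrow> int) \<Rightarrow> bool" where
  "is_divisor V D \<longleftrightarrow> (\<forall>x. x \<notin> V \<longrightarrow> D x = 0)"

definition deg :: "'a set \<Rightarrow> ('a \<Rightarrow> int) \<Rightarrow> int" where
  "deg V D = (\<Sum>x\<in>V. D x)"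

definition effective :: "'a set \<Rightarrow> ('a \<Rightarrow> int) \<Rightarrow> bool" where
  "effective V D \<longleftrightarrow> is_divisor V D \<and> (\<forall>x\<in>V. D x \<ge> 0)"

text \<open>Effect of firing every vertex w exactly f w times (f w may be negative).\<close>
definition fire :: "'a set \<Rightarrow> ('a \<Rightarrow> 'a \<Rightarrow> nat) \<Rightarrow> ('a \<Rightarrow> int) \<Rightarrow> 'a \<Rightarrow> int" where
  "fire V m f x = (if x \<in> V then - f x * valence V m x + (\<Sum>w\<in>V. f w * int (m w x)) else 0)"

definition lin_equiv :: "'a set \<Rightarrow> ('a \<Rightarrow> 'a \<Rightarrow> nat) \<Rightarrow> ('a \<Rightarrow> int) \<Rightarrow> ('a \<Rightarrow> int) \<Rightarrow> bool" where
  "lin_equiv V m D D' \<longleftrightarrow> (\<exists>f :: 'a \<Rightarrow> int. \<forall>x. D' x = D x + fire V m f x)"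

definition equiv_effective :: "'a set \<Rightarrow> ('a \<Rightarrow> 'a \<Rightarrow> nat) \<Rightarrow> ('a \<Rightarrow> int) \<Rightarrow> bool" where
  "equiv_effective V m D \<longleftrightarrow> (\<exists>E. effective V E \<and> lin_equiv V m D E)"

definition rank :: "'a set \<Rightarrow> ('a \<Rightarrow> 'a \<Rightarrow> nat) \<Rightarrow> ('a \<Rightarrow> int) \<Rightarrow> int" where
  "rank V m D = (if \<not> equiv_effective V m D then -1
     else int (GREATEST r :: nat. \<forall>E. effective V E \<and> deg V E = int r
                 \<longrightarrow> equiv_effective V m (\<lambda>x. D x - E x)))"

definition twist :: "('a \<Rightarrow> int) \<Rightarrow> 'a \<Rightarrow> int \<Rightarrow> 'a \<Rightarrow> int \<Rightarrow> 'a \<Rightarrow> int" where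
  "twist D u a v b = (\<lambda>x. D x + (if x = u then a else 0) + (if x = v then b else 0))"

definition Delta :: "'a set \<Rightarrow> ('a \<Rightarrow> 'a \<Rightarrow> nat) \<Rightarrow> 'a \<Rightarrow> 'a \<Rightarrow> ('a \<Rightarrow> int) \<Rightarrow> int" where
  "Delta V m u v D = rank V m D - rank V m (twist D u (-1) v 0)
      - rank V m (twist D u 0 v (-1)) + rank V m (twist D u (-1) v (-1))"

definition submodular :: "'a set \<Rightarrow> ('a \<Rightarrow> 'a \<Rightarrow> nat) \<Rightarrow> 'a \<Rightarrow> 'a \<Rightarrow> ('a \<Rightarrow> int) \<Rightarrow> bool" where
  "submodular V m u v D \<longleftrightarrow> (\<forall>a b. Delta V m u v (twist D u a v b) \<ge> 0)"

definition transmission :: "'a set \<Rightarrow> ('a \<Rightarrow> 'a \<Rightarrow> nat) \<Rightarrow> 'a \<Rightarrow> 'a \<Rightarrow> ('a \<Rightarrow> int) \<Rightarrow> int \<Rightarrow> int" where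
  "transmission V m u v D = (THE \<tau>. bij \<tau> \<and>
     (\<forall>a b. (if \<tau> b = a then 1 else 0) = Delta V m u v (twist D u a v (-b))))"

definition inversions :: "(int \<Rightarrow> int) \<Rightarrow> (int \<times> int) set" where
  "inversions \<tau> = {(a, b). a < b \<and> \<tau> a > \<tau> b}"

definition k_equiv :: "int \<Rightarrow> (int \<times> int) set \<Rightarrow> ((int \<times> int) \<times> (int \<times> int)) set" where
  "k_equiv k S = {((a, b), (a', b')). (a, b) \<in> S \<and> (a', b') \<in> S \<and>
                     a - a' = b - b' \<and> k dvd (a - a')}"

definition inv_k :: "int \<Rightarrow> (int \<Rightarrow> int) \<Rightarrow> enat" where
  "inv_k k \<tau> = (let C = inversions \<tau> // k_equiv k (inversions \<tau>) in
                  if finite C then enat (card C) else \<infinity>)"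

definition k_general_transmission ::
  "'a set \<Rightarrow> ('a \<Rightarrow> 'a \<Rightarrow> nat) \<Rightarrow> 'a \<Rightarrow> 'a \<Rightarrow> nat \<Rightarrow> bool" where
  "k_general_transmission V m u v k \<longleftrightarrow>
     lin_equiv V m (\<lambda>x. if x = u then int k else 0) (\<lambda>x. if x = v then int k else 0)
     \<and> (\<forall>D. is_divisor V D \<longrightarrow> submodular V m u v D)
     \<and> (\<forall>D. is_divisor V D \<longrightarrow>
          inv_k (int k) (transmission V m u v D) \<le> enat (nat (genus V m)))"

definition BN_general :: "'a set \<Rightarrow> ('a \<Rightarrow> 'a \<Rightarrow> nat) \<Rightarrow> bool" where
  "BN_general V m \<longleftrightarrow> (\<forall>D. is_divisor V D \<longrightarrow> (\<forall>r::int. 0 \<le> r \<and> r \<le> rank V m D \<longrightarrow>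
      genus V m - (r + 1) * (genus V m - deg V D + r) \<ge> 0))"

end

theory Submission
  imports Defs
begin

text \<open>
Fix a divisor D of degree d and let R a b = r(D + a u - b v). This rank drops by at most one when a
decreases or b increases, has nonnegative mixed differences \<Delta> (submodularity), is invariant under
(a, b) \<mapsto> (a + k, b + k) because k u \<sim> k v, and satisfies d + a - b - C \<le> R a b, as well as
R a b \<le> d + a - b - g once d + a - b is large (a weak Riemann--Roch, proved directly from reduced
divisors and an acyclic orientation). Such an array is encoded by a k-periodic bijection \<tau>, the
transmission permutation: r(D) + 1 = #{b \<ge> 0. \<tau> b \<le> 0}, and comparison with large twists gives
r(D) + g - d \<le> #{b < 0. \<tau> b > 0}. Every pair in the product of these two sets is an inversion of \<tau>.
If one of the sets lies in a window of length k, these inversions are pairwise k-inequivalent;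
otherwise periodicity produces 2k - 1 inequivalent inversions. With 2k \<ge> g + 2 both cases give
(r + 1)(g - d + r) \<le> inv_k(\<tau>) \<le> g.
\<close>

section \<open>Chip-firing\<close>

locale multigraph =
  fixes V :: "'a set" and m :: "'a \<Rightarrow> 'a \<Rightarrow> nat"
  assumes is_graph: "is_graph V m"
begin

lemma finite_V: "finite V"
  using is_graph unfolding is_graph_def by auto

lemma V_nonempty: "V \<noteq> {}"
  using is_graph unfolding is_graph_def by auto

lemma mult_sym: "m x y = m y x"
  using is_graph unfolding is_graph_def by auto

lemma mult_self: "m x x = 0"
  using is_graph unfolding is_graph_def by auto

lemma mult_pos_imp_in_V: "m x y > 0 \<Longrightarrow> x \<in> V \<and> y \<in> V"
  using is_graph unfolding is_graph_def by auto

lemma connected: "x \<in> V \<Longrightarrow> y \<in> V \<Longrightarrow> (x, y) \<in> {(a, b). m a b > 0}\<^sup>*"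
  using is_graph unfolding is_graph_def by auto

lemma fire_eq: "x \<in> V \<Longrightarrow> fire V m f x = (\<Sum>w\<in>V. int (m w x) * (f w - f x))"
proof -
  assume x: "x \<in> V"
  have "fire V m f x = - f x * (\<Sum>w\<in>V. int (m w x)) + (\<Sum>w\<in>V. f w * int (m w x))"
    using x mult_sym unfolding fire_def valence_def by simp
  also have "\<dots> = (\<Sum>w\<in>V. int (m w x) * (f w - f x))"
    by (simp add: sum_distrib_left sum.distrib[symmetric] algebra_simps sum_subtractf)
  finally show ?thesis .
qed

lemma fire_outside: "x \<notin> V \<Longrightarrow> fire V m f x = 0"
  unfolding fire_def by simp

lemma fire_add: "fire V m (\<lambda>x. f x + h x) x = fire V m f x + fire V m h x"
  by (cases "x \<in> V") (simp_all add: fire_eq fire_outside sum.distrib[symmetric] algebra_simps)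

lemma fire_scale: "fire V m (\<lambda>x. c * f x) x = c * fire V m f x"
  by (cases "x \<in> V") (simp_all add: fire_eq fire_outside sum_distrib_left algebra_simps)

lemma sum_fire: "(\<Sum>x\<in>V. fire V m f x) = 0"
proof -
  have "(\<Sum>x\<in>V. fire V m f x)
      = (\<Sum>x\<in>V. \<Sum>w\<in>V. int (m w x) * f w) - (\<Sum>x\<in>V. \<Sum>w\<in>V. int (m w x) * f x)"
    by (simp add: fire_eq algebra_simps sum_subtractf)
  also have "(\<Sum>x\<in>V. \<Sum>w\<in>V. int (m w x) * f w) = (\<Sum>w\<in>V. \<Sum>x\<in>V. int (m w x) * f w)"
    by (rule sum.swap)
  also have "\<dots> = (\<Sum>x\<in>V. \<Sum>w\<in>V. int (m w x) * f x)"
    using mult_sym by simp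
  finally show ?thesis by simp
qed

lemma lin_equiv_sym: "lin_equiv V m D D' \<Longrightarrow> lin_equiv V m D' D"
proof -
  assume "lin_equiv V m D D'"
  then obtain f where "\<forall>x. D' x = D x + fire V m f x"
    unfolding lin_equiv_def by blast
  then show ?thesis
    unfolding lin_equiv_def using fire_scale[of "-1" f] by (intro exI[of _ "\<lambda>x. - f x"]) simp
qed

lemma lin_equiv_trans: "lin_equiv V m D D' \<Longrightarrow> lin_equiv V m D' D'' \<Longrightarrow> lin_equiv V m D D''"
proof -
  assume "lin_equiv V m D D'" "lin_equiv V m D' D''"
  then obtain f h where "\<forall>x. D' x = D x + fire V m f x" "\<forall>x. D'' x = D' x + fire V m h x"
    unfolding lin_equiv_def by blast
  then show ?thesis
    unfolding lin_equiv_def by (intro exI[of _ "\<lambda>x. f x + h x"]) (simp add: fire_add)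
qed

lemma lin_equiv_add: "lin_equiv V m D D' \<Longrightarrow> lin_equiv V m (\<lambda>x. D x + H x) (\<lambda>x. D' x + H x)"
  unfolding lin_equiv_def by auto

lemma deg_lin_equiv: "lin_equiv V m D D' \<Longrightarrow> deg V D' = deg V D"
  unfolding lin_equiv_def deg_def by (auto simp: sum.distrib sum_fire)

lemma is_divisor_lin_equiv: "lin_equiv V m D D' \<Longrightarrow> is_divisor V D \<Longrightarrow> is_divisor V D'"
  unfolding lin_equiv_def is_divisor_def using fire_outside by auto


section \<open>Rank\<close>

abbreviation eqe :: "('a \<Rightarrow> int) \<Rightarrow> bool" where "eqe D \<equiv> equiv_effective V m D"
abbreviation rk :: "('a \<Rightarrow> int) \<Rightarrow> int" where "rk D \<equiv> rank V m D"

definition absorbs :: "('a \<Rightarrow> int) \<Rightarrow> nat \<Rightarrow> bool" where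
  "absorbs D n \<longleftrightarrow> (\<forall>E. effective V E \<and> deg V E = int n \<longrightarrow> eqe (\<lambda>x. D x - E x))"

definition point :: "'a \<Rightarrow> int \<Rightarrow> 'a \<Rightarrow> int" where
  "point x0 c = (\<lambda>x. if x = x0 then c else 0)"

lemma effective_point: "x0 \<in> V \<Longrightarrow> 0 \<le> c \<Longrightarrow> effective V (point x0 c)"
  unfolding effective_def is_divisor_def point_def by auto

lemma deg_point: "x0 \<in> V \<Longrightarrow> deg V (point x0 c) = c"
  unfolding deg_def point_def using finite_V by simp

lemma deg_add: "deg V (\<lambda>x. D x + E x) = deg V D + deg V E"
  unfolding deg_def by (simp add: sum.distrib)

lemma deg_diff: "deg V (\<lambda>x. D x - E x) = deg V D - deg V E"
  unfolding deg_def by (simp add: sum_subtractf)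

lemma effective_add: "effective V E \<Longrightarrow> effective V H \<Longrightarrow> effective V (\<lambda>x. E x + H x)"
  unfolding effective_def is_divisor_def by auto

lemma deg_nonneg_if_effective: "effective V E \<Longrightarrow> 0 \<le> deg V E"
  unfolding effective_def deg_def by (simp add: sum_nonneg)

lemma effective_deg_0: "effective V E \<Longrightarrow> deg V E = 0 \<Longrightarrow> E = (\<lambda>x. 0)"
  unfolding effective_def is_divisor_def deg_def
  using finite_V sum_nonneg_eq_0_iff by (metis ext)

lemma deg_nonneg_if_eqe: "eqe D \<Longrightarrow> 0 \<le> deg V D"
  unfolding equiv_effective_def using deg_lin_equiv deg_nonneg_if_effective by metis

lemma eqe_lin_equiv: "lin_equiv V m D D' \<Longrightarrow> eqe D \<Longrightarrow> eqe D'"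
  unfolding equiv_effective_def using lin_equiv_sym lin_equiv_trans by blast

lemma eqe_add: "eqe D \<Longrightarrow> effective V H \<Longrightarrow> eqe (\<lambda>x. D x + H x)"
  unfolding equiv_effective_def using effective_add lin_equiv_add by blast

lemma absorbs_0_iff: "absorbs D 0 \<longleftrightarrow> eqe D"
proof
  assume "absorbs D 0"
  obtain x0 where x0: "x0 \<in> V" using V_nonempty by blast
  have "point x0 0 = (\<lambda>x. 0)" unfolding point_def by auto
  then show "eqe D"
    using \<open>absorbs D 0\<close> effective_point[OF x0, of 0] deg_point[OF x0, of 0]
    unfolding absorbs_def by fastforce
qed (auto simp: absorbs_def dest: effective_deg_0)

lemma absorbs_le_deg: "absorbs D n \<Longrightarrow> int n \<le> deg V D"
proof -
  assume absorbs: "absorbs D n"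
  obtain x0 where x0: "x0 \<in> V" using V_nonempty by blast
  then have "eqe (\<lambda>x. D x - point x0 (int n) x)"
    using absorbs effective_point deg_point unfolding absorbs_def by simp
  then show ?thesis using deg_nonneg_if_eqe deg_diff deg_point[OF x0] by fastforce
qed

lemma absorbs_add: "absorbs D n \<Longrightarrow> effective V H \<Longrightarrow> absorbs (\<lambda>x. D x + H x) n"
  unfolding absorbs_def
proof (intro allI impI)
  fix E assume "\<forall>E. effective V E \<and> deg V E = int n \<longrightarrow> eqe (\<lambda>x. D x - E x)"
    and "effective V H" and "effective V E \<and> deg V E = int n"
  then have "eqe (\<lambda>x. (D x - E x) + H x)" using eqe_add by blast
  then show "eqe (\<lambda>x. D x + H x - E x)" by (simp add: algebra_simps)
qed

lemma absorbs_minus_point: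
  assumes x0: "x0 \<in> V" and absorbs: "absorbs D (Suc n)"
  shows "absorbs (\<lambda>x. D x - point x0 1 x) n"
  unfolding absorbs_def
proof (intro allI impI)
  fix E assume E: "effective V E \<and> deg V E = int n"
  then have "effective V (\<lambda>x. E x + point x0 1 x)"
    using effective_add effective_point[OF x0] by simp
  moreover have "deg V (\<lambda>x. E x + point x0 1 x) = int (Suc n)"
    using E by (simp add: deg_add deg_point[OF x0])
  ultimately have "eqe (\<lambda>x. D x - (E x + point x0 1 x))"
    using absorbs unfolding absorbs_def by blast
  then show "eqe (\<lambda>x. D x - point x0 1 x - E x)" by (simp add: algebra_simps)
qed

lemma absorbs_Suc: "absorbs D (Suc n) \<Longrightarrow> absorbs D n"
proof -
  assume "absorbs D (Suc n)"
  obtain x0 where x0: "x0 \<in> V" using V_nonempty by blast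
  have "absorbs (\<lambda>x. (D x - point x0 1 x) + point x0 1 x) n"
    by (rule absorbs_add[OF absorbs_minus_point[OF x0 \<open>absorbs D (Suc n)\<close>] effective_point[OF x0]]) simp
  then show ?thesis by simp
qed

lemma absorbs_mono: "absorbs D n \<Longrightarrow> n' \<le> n \<Longrightarrow> absorbs D n'"
  by (induction n) (auto simp: le_Suc_eq dest: absorbs_Suc)

lemma rank_eq_Greatest: "eqe D \<Longrightarrow> rk D = int (GREATEST r. absorbs D r)"
  unfolding rank_def absorbs_def by simp

lemma absorbs_bounded: "absorbs D y \<Longrightarrow> y \<le> nat (deg V D)"
  using absorbs_le_deg by fastforce

lemma absorbs_rank: "eqe D \<Longrightarrow> absorbs D (nat (rk D))"
  using GreatestI_nat[of "absorbs D" 0 "nat (deg V D)"] absorbs_0_iff absorbs_bounded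
  by (simp add: rank_eq_Greatest)

lemma le_rank_if_absorbs: "absorbs D n \<Longrightarrow> int n \<le> rk D"
proof -
  assume absorbs: "absorbs D n"
  then have "eqe D" using absorbs_mono absorbs_0_iff by blast
  moreover have "n \<le> (GREATEST r. absorbs D r)"
    using Greatest_le_nat[of "absorbs D" n "nat (deg V D)"] absorbs absorbs_bounded by blast
  ultimately show ?thesis by (simp add: rank_eq_Greatest)
qed

lemma rank_not_eqe: "\<not> eqe D \<Longrightarrow> rk D = -1"
  unfolding rank_def by simp

lemma rank_ge_minus1: "-1 \<le> rk D"
  unfolding rank_def by simp

lemma le_rank_iff: "0 \<le> n \<Longrightarrow> n \<le> rk D \<longleftrightarrow> absorbs D (nat n)"
proof
  assume n: "0 \<le> n" "n \<le> rk D"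
  then have "eqe D" using rank_not_eqe[of D] by (cases "eqe D") simp_all
  from absorbs_mono[OF absorbs_rank[OF this]] show "absorbs D (nat n)" using n by simp
next
  assume "0 \<le> n" "absorbs D (nat n)"
  then show "n \<le> rk D" using le_rank_if_absorbs[of D "nat n"] by simp
qed

lemma rank_nonneg_iff: "0 \<le> rk D \<longleftrightarrow> eqe D"
  using le_rank_iff[of 0] absorbs_0_iff by simp

lemma rank_eq_minus1_if_deg_neg: "deg V D < 0 \<Longrightarrow> rk D = -1"
  using deg_nonneg_if_eqe rank_not_eqe by (meson not_le)

lemma rank_le_deg: "0 \<le> deg V D \<Longrightarrow> rk D \<le> deg V D"
proof (cases "eqe D")
  case True
  then show ?thesis using absorbs_le_deg[OF absorbs_rank[OF True]] rank_nonneg_iff by simp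
qed (simp add: rank_not_eqe)

lemma absorbs_lin_equiv: "lin_equiv V m D D' \<Longrightarrow> absorbs D n \<Longrightarrow> absorbs D' n"
  unfolding absorbs_def
proof (intro allI impI)
  fix E assume "lin_equiv V m D D'" and "\<forall>E. effective V E \<and> deg V E = int n \<longrightarrow> eqe (\<lambda>x. D x - E x)"
    and "effective V E \<and> deg V E = int n"
  moreover have "lin_equiv V m (\<lambda>x. D x - E x) (\<lambda>x. D' x - E x)"
    using lin_equiv_add[OF \<open>lin_equiv V m D D'\<close>, of "\<lambda>x. - E x"] by simp
  ultimately show "eqe (\<lambda>x. D' x - E x)" using eqe_lin_equiv by blast
qed

lemma rank_lin_equiv: "lin_equiv V m D D' \<Longrightarrow> rk D = rk D'"
proof -
  have le: "rk A \<le> rk B" if "lin_equiv V m A B" for A B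
    using le_rank_iff[of "rk A"] absorbs_lin_equiv[OF that] rank_ge_minus1[of B]
    by (cases "0 \<le> rk A") auto
  show "lin_equiv V m D D' \<Longrightarrow> rk D = rk D'"
    using le le lin_equiv_sym by (meson order_antisym)
qed

lemma rank_mono: "effective V H \<Longrightarrow> rk D \<le> rk (\<lambda>x. D x + H x)"
proof (cases "0 \<le> rk D")
  case True
  assume "effective V H"
  then have "absorbs (\<lambda>x. D x + H x) (nat (rk D))"
    using absorbs_add absorbs_rank rank_nonneg_iff True by blast
  then show ?thesis using le_rank_if_absorbs[of _ "nat (rk D)"] True by simp
next
  case False
  then show ?thesis using rank_ge_minus1[of "\<lambda>x. D x + H x"] by simp
qed

lemma rank_minus_point:
  assumes "x0 \<in> V"
  shows "rk (\<lambda>x. D x - point x0 1 x) \<le> rk D" and "rk D \<le> rk (\<lambda>x. D x - point x0 1 x) + 1"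
proof -
  show "rk (\<lambda>x. D x - point x0 1 x) \<le> rk D"
    using rank_mono[OF effective_point[OF assms, of 1], of "\<lambda>x. D x - point x0 1 x"] by simp
  show "rk D \<le> rk (\<lambda>x. D x - point x0 1 x) + 1"
  proof (cases "1 \<le> rk D")
    case True
    then have "Suc (nat (rk D - 1)) = nat (rk D)" by simp
    then have "absorbs D (Suc (nat (rk D - 1)))"
      using absorbs_rank[of D] rank_nonneg_iff[of D] True by simp
    from le_rank_if_absorbs[OF absorbs_minus_point[OF assms this]] show ?thesis
      using True by simp
  next
    case False
    then show ?thesis using rank_ge_minus1[of "\<lambda>x. D x - point x0 1 x"] by simp
  qed
qed


section \<open>Reduced divisors and a weak Riemann--Roch theorem\<close>

definition edge_dist :: "'a \<Rightarrow> 'a \<Rightarrow> nat" where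
  "edge_dist u x = (LEAST n. (u, x) \<in> {(a, b). m a b > 0} ^^ n)"

lemma edge_dist_path: "u \<in> V \<Longrightarrow> x \<in> V \<Longrightarrow> (u, x) \<in> {(a, b). m a b > 0} ^^ edge_dist u x"
  using connected[of u x] rtrancl_power LeastI unfolding edge_dist_def by metis

lemma exists_closer_neighbour:
  assumes u: "u \<in> V" and x: "x \<in> V" and "x \<noteq> u"
  shows "\<exists>p\<in>V. 0 < m p x \<and> edge_dist u p < edge_dist u x"
proof -
  have path: "(u, x) \<in> {(a, b). m a b > 0} ^^ edge_dist u x"
    by (rule edge_dist_path[OF u x])
  then obtain n where n: "edge_dist u x = Suc n"
    using \<open>x \<noteq> u\<close> by (cases "edge_dist u x") auto
  with path obtain p where "(u, p) \<in> {(a, b). m a b > 0} ^^ n" and "0 < m p x"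
    by (auto elim: relpow_Suc_E)
  moreover from this have "edge_dist u p \<le> n"
    unfolding edge_dist_def by (intro Least_le)
  ultimately show ?thesis using mult_pos_imp_in_V n by force
qed

definition total_valence :: int where
  "total_valence = (\<Sum>x\<in>V. valence V m x)"

lemma valence_nonneg: "0 \<le> valence V m x"
  unfolding valence_def by (simp add: sum_nonneg)

lemma valence_le_total_valence: "x \<in> V \<Longrightarrow> valence V m x \<le> total_valence"
  unfolding total_valence_def using finite_V valence_nonneg by (metis member_le_sum)

lemma total_valence_nonneg: "0 \<le> total_valence"
  unfolding total_valence_def using valence_nonneg by (simp add: sum_nonneg)

text \<open>
  Each vertex x \<noteq> u has a neighbour p closer to u, and f p \<ge> (total_valence + 1) f x,
  which outweighs the loss of valence(x) * f x.\<close>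
lemma exists_potential:
  assumes u: "u \<in> V"
  shows "\<exists>f. (\<forall>x. 0 \<le> f x \<and> f x \<le> f u) \<and> (\<forall>x\<in>V - {u}. 1 \<le> fire V m f x)"
proof -
  define Dm where "Dm = Max (edge_dist u ` V)"
  define M :: nat where "M = nat total_valence + 1"
  define f where "f x = int (M ^ (Dm - edge_dist u x))" for x
  have M: "1 \<le> M" unfolding M_def by simp
  have f_nonneg: "0 \<le> f x" for x unfolding f_def by simp
  have "edge_dist u u = 0" unfolding edge_dist_def by (rule Least_equality) auto
  then have f_le: "f x \<le> f u" for x unfolding f_def using M by (simp add: power_increasing)
  have "1 \<le> fire V m f x" if x: "x \<in> V - {u}" for x
  proof -
    obtain p where p: "p \<in> V" "0 < m p x" "edge_dist u p < edge_dist u x"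
      using exists_closer_neighbour[OF u] x by blast
    have "edge_dist u x \<le> Dm" unfolding Dm_def using x finite_V by simp
    then have "Suc (Dm - edge_dist u x) \<le> Dm - edge_dist u p" using p(3) by simp
    then have "M * M ^ (Dm - edge_dist u x) \<le> M ^ (Dm - edge_dist u p)"
      using power_increasing[OF _ M] by (metis power_Suc)
    then have fp: "int M * f x \<le> f p" unfolding f_def by (metis of_nat_le_iff of_nat_mult)
    have "fire V m f x = (\<Sum>w\<in>V. int (m w x) * f w) - valence V m x * f x"
      using x unfolding fire_def valence_def by (simp add: mult_sym algebra_simps)
    moreover have "int (m p x) * f p \<le> (\<Sum>w\<in>V. int (m w x) * f w)"
      using finite_V p(1) f_nonneg by (intro member_le_sum) auto
    moreover have "f p \<le> int (m p x) * f p" using p(2) f_nonneg[of p] by (simp add: mult_le_cancel_right1)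
    moreover have "valence V m x * f x \<le> (int M - 1) * f x"
      using valence_le_total_valence[of x] x total_valence_nonneg f_nonneg[of x]
      unfolding M_def by (intro mult_right_mono) auto
    moreover have "1 \<le> f x" unfolding f_def using M by simp
    ultimately show ?thesis using fp by (simp add: algebra_simps)
  qed
  then show ?thesis using f_nonneg f_le by blast
qed

lemma fire_point:
  "x \<in> V \<Longrightarrow> fire V m (point x 1) y = (if y \<in> V then int (m x y) - (if y = x then valence V m x else 0) else 0)"
proof -
  assume x: "x \<in> V"
  have "(\<Sum>w\<in>V. point x 1 w * int (m w y)) = (\<Sum>w\<in>V. if w = x then int (m x y) else 0)"
    by (intro sum.cong) (auto simp: point_def mult_sym)
  also have "\<dots> = int (m x y)" using x finite_V by simp
  finally show ?thesis unfolding fire_def by (auto simp: point_def)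
qed

lemma sum_mult_fire_sym: "(\<Sum>y\<in>V. g y * fire V m h y) = (\<Sum>y\<in>V. h y * fire V m g y)"
proof -
  have expand: "(\<Sum>y\<in>V. g y * fire V m h y)
      = (\<Sum>y\<in>V. \<Sum>w\<in>V. int (m w y) * g y * h w) - (\<Sum>y\<in>V. \<Sum>w\<in>V. int (m w y) * g y * h y)"
    for g h :: "'a \<Rightarrow> int"
    by (simp add: fire_eq sum_distrib_left sum_subtractf[symmetric] algebra_simps)
  have "(\<Sum>y\<in>V. \<Sum>w\<in>V. int (m w y) * g y * h w) = (\<Sum>y\<in>V. \<Sum>w\<in>V. int (m w y) * h y * g w)"
    by (subst sum.swap) (simp add: mult_sym algebra_simps)
  then show ?thesis by (simp add: expand algebra_simps)
qed

lemma exists_equiv_nonneg_off: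
  assumes u: "u \<in> V" and G: "is_divisor V G"
  obtains f G' where "\<forall>x. 0 \<le> f x \<and> f x \<le> f u" "\<forall>x\<in>V - {u}. 1 \<le> fire V m f x"
    and "lin_equiv V m G G'" "is_divisor V G'" "\<forall>x\<in>V - {u}. 0 \<le> G' x"
proof -
  obtain f where f: "\<forall>x. 0 \<le> f x \<and> f x \<le> f u" "\<forall>x\<in>V - {u}. 1 \<le> fire V m f x"
    using exists_potential[OF u] by blast
  define t where "t = (\<Sum>x\<in>V. \<bar>G x\<bar>)"
  define G' where "G' x = G x + fire V m (\<lambda>y. t * f y) x" for x
  have equiv: "lin_equiv V m G G'" unfolding lin_equiv_def G'_def by blast
  have "0 \<le> G' x" if x: "x \<in> V - {u}" for x
  proof -
    have "\<bar>G x\<bar> \<le> t" unfolding t_def using finite_V x by (intro member_le_sum) auto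
    moreover have "t \<le> t * fire V m f x"
      using f(2) x order_trans[OF abs_ge_zero \<open>\<bar>G x\<bar> \<le> t\<close>] by (simp add: mult_le_cancel_left1)
    ultimately show ?thesis unfolding G'_def by (simp add: fire_scale)
  qed
  then show ?thesis using that f equiv is_divisor_lin_equiv[OF equiv G] by blast
qed

text \<open>
  Minimise S G' = (\<Sum>y. (f u - f y) G' y) over divisors equivalent to G that are nonnegative off u:
  firing a vertex x \<noteq> u with G' x \<ge> valence x keeps the constraints and lowers S by fire f x \<ge> 1.\<close>
lemma exists_equiv_bounded_off:
  assumes u: "u \<in> V" and G: "is_divisor V G"
  shows "\<exists>G'. lin_equiv V m G G' \<and> is_divisor V G' \<and> (\<forall>x\<in>V - {u}. 0 \<le> G' x \<and> G' x < valence V m x)"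
proof -
  obtain f G1 where f: "\<forall>x. 0 \<le> f x \<and> f x \<le> f u" "\<forall>x\<in>V - {u}. 1 \<le> fire V m f x"
    and G1: "lin_equiv V m G G1" "is_divisor V G1" "\<forall>x\<in>V - {u}. 0 \<le> G1 x"
    using exists_equiv_nonneg_off[OF u G] by blast
  define Cands where "Cands = {G'. lin_equiv V m G G' \<and> is_divisor V G' \<and> (\<forall>x\<in>V - {u}. 0 \<le> G' x)}"
  define S where "S G' = (\<Sum>y\<in>V. (f u - f y) * G' y)" for G'
  have S_nonneg: "0 \<le> S G'" if "G' \<in> Cands" for G'
    unfolding S_def
  proof (intro sum_nonneg)
    fix y assume "y \<in> V"
    then show "0 \<le> (f u - f y) * G' y"
      using that f(1) unfolding Cands_def by (cases "y = u") auto
  qed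
  obtain G' where G': "G' \<in> Cands" and min: "\<And>H. H \<in> Cands \<Longrightarrow> nat (S G') \<le> nat (S H)"
    using ex_has_least_nat[of "\<lambda>H. H \<in> Cands" G1 "\<lambda>H. nat (S H)"] G1 unfolding Cands_def by blast
  have "G' x < valence V m x" if x: "x \<in> V - {u}" for x
  proof (rule ccontr)
    assume big: "\<not> G' x < valence V m x"
    define G'' where "G'' y = G' y + fire V m (point x 1) y" for y
    have "lin_equiv V m G' G''" unfolding lin_equiv_def G''_def by blast
    moreover have "0 \<le> G'' y" if "y \<in> V - {u}" for y
      using G' big that x unfolding G''_def Cands_def by (auto simp: fire_point mult_self)
    ultimately have "G'' \<in> Cands"
      using G' lin_equiv_trans is_divisor_lin_equiv unfolding Cands_def by blast
    have "(\<Sum>y\<in>V. (f u - f y) * fire V m (point x 1) y) = (\<Sum>y\<in>V. point x 1 y * fire V m (\<lambda>y. f u - f y) y)"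
      by (rule sum_mult_fire_sym)
    also have "\<dots> = fire V m (\<lambda>y. f u - f y) x"
      using x finite_V
      by (subst sum.cong[OF refl, of _ _ "\<lambda>y. if y = x then fire V m (\<lambda>y. f u - f y) y else 0"])
        (auto simp: point_def)
    also have "\<dots> = - fire V m f x"
      using x by (simp add: fire_eq sum_negf[symmetric] algebra_simps)
    finally have "S G'' = S G' - fire V m f x"
      unfolding S_def G''_def by (simp add: distrib_left sum.distrib)
    moreover have "1 \<le> fire V m f x" using f(2) x by blast
    ultimately have "nat (S G'') < nat (S G')" using S_nonneg[OF \<open>G'' \<in> Cands\<close>] by simp
    then show False using min[OF \<open>G'' \<in> Cands\<close>] by (meson not_le)
  qed
  then show ?thesis using G' unfolding Cands_def by blast
qed

lemma eqe_if_deg_ge: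
  assumes G: "is_divisor V G" and deg: "total_valence \<le> deg V G"
  shows "eqe G"
proof -
  obtain u where u: "u \<in> V" using V_nonempty by blast
  obtain G' where equiv: "lin_equiv V m G G'" and G': "is_divisor V G'"
    and bounded: "\<forall>x\<in>V - {u}. 0 \<le> G' x \<and> G' x < valence V m x"
    using exists_equiv_bounded_off[OF u G] by blast
  have "deg V G = G' u + (\<Sum>x\<in>V - {u}. G' x)"
    using deg_lin_equiv[OF equiv] finite_V u unfolding deg_def by (simp add: sum.remove)
  moreover have "(\<Sum>x\<in>V - {u}. G' x) \<le> (\<Sum>x\<in>V - {u}. valence V m x)"
    using bounded by (intro sum_mono) (simp add: less_imp_le)
  moreover have "(\<Sum>x\<in>V - {u}. valence V m x) \<le> total_valence"
    unfolding total_valence_def using finite_V valence_nonneg by (intro sum_mono2) auto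
  ultimately have "0 \<le> G' u" using deg by linarith
  then have "effective V G'" using G' bounded unfolding effective_def by blast
  then show ?thesis using equiv unfolding equiv_effective_def by blast
qed

lemma rank_ge_deg_minus_total_valence:
  assumes G: "is_divisor V G"
  shows "deg V G - total_valence \<le> rk G"
proof (cases "0 \<le> deg V G - total_valence")
  case True
  have "absorbs G (nat (deg V G - total_valence))"
    unfolding absorbs_def
  proof (intro allI impI)
    fix E assume E: "effective V E \<and> deg V E = int (nat (deg V G - total_valence))"
    then have "is_divisor V (\<lambda>x. G x - E x)"
      using G unfolding effective_def is_divisor_def by simp
    moreover have "total_valence \<le> deg V (\<lambda>x. G x - E x)" using E True by (simp add: deg_diff)
    ultimately show "eqe (\<lambda>x. G x - E x)" by (rule eqe_if_deg_ge)
  qed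
  then show ?thesis using le_rank_iff True by simp
qed (use rank_ge_minus1[of G] in simp)


definition down_degree :: "('a \<Rightarrow> nat) \<Rightarrow> 'a \<Rightarrow> nat" where
  "down_degree h x = (\<Sum>y\<in>V. if h y < h x then m x y else 0)"

lemma sum_down_degree:
  shows "2 * (\<Sum>x\<in>V. down_degree h x) \<le> (\<Sum>x\<in>V. \<Sum>y\<in>V. m x y)"
    and "inj_on h V \<Longrightarrow> 2 * (\<Sum>x\<in>V. down_degree h x) = (\<Sum>x\<in>V. \<Sum>y\<in>V. m x y)"
proof -
  have up: "(\<Sum>x\<in>V. \<Sum>y\<in>V. if h x < h y then m x y else 0) = (\<Sum>x\<in>V. down_degree h x)"
    unfolding down_degree_def
    by (subst sum.swap) (rule sum.cong[OF refl], rule sum.cong[OF refl], simp add: mult_sym)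
  have split: "(\<Sum>x\<in>V. \<Sum>y\<in>V. m x y) = (\<Sum>x\<in>V. down_degree h x)
     + (\<Sum>x\<in>V. \<Sum>y\<in>V. if h x < h y then m x y else 0) + (\<Sum>x\<in>V. \<Sum>y\<in>V. if h x = h y then m x y else 0)"
    unfolding down_degree_def by (simp add: sum.distrib[symmetric]) (intro sum.cong refl, auto)
  show "2 * (\<Sum>x\<in>V. down_degree h x) \<le> (\<Sum>x\<in>V. \<Sum>y\<in>V. m x y)"
    using split up by simp
  assume "inj_on h V"
  then have "(\<Sum>x\<in>V. \<Sum>y\<in>V. if h x = h y then m x y else 0) = 0"
    by (intro sum.neutral ballI) (auto simp: inj_on_def mult_self)
  then show "2 * (\<Sum>x\<in>V. down_degree h x) = (\<Sum>x\<in>V. \<Sum>y\<in>V. m x y)"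
    using split up by simp
qed

abbreviation g :: int where "g \<equiv> genus V m"

lemma genus_nonneg: "0 \<le> g"
proof -
  obtain u where u: "u \<in> V" using V_nonempty by blast
  have "(\<Sum>x\<in>V. if x = u then 0 else 1) \<le> (\<Sum>x\<in>V. down_degree (edge_dist u) x)"
  proof (intro sum_mono)
    fix x assume x: "x \<in> V"
    show "(if x = u then 0 else 1) \<le> down_degree (edge_dist u) x"
    proof (cases "x = u")
      case False
      then obtain p where p: "p \<in> V" "0 < m p x" "edge_dist u p < edge_dist u x"
        using exists_closer_neighbour[OF u x] by blast
      then have "m x p \<le> down_degree (edge_dist u) x"
        unfolding down_degree_def using finite_V member_le_sum[OF p(1), of "\<lambda>y. if edge_dist u y < edge_dist u x then m x y else 0"]
        by simp
      then show ?thesis using p False by (simp add: mult_sym)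
    qed simp
  qed
  moreover have "(\<Sum>x\<in>V. if x = u then 0 else (1::nat)) = card V - 1"
    using finite_V u by (simp add: sum.If_cases Diff_eq[symmetric] Int_absorb1 card_Diff_singleton)
  moreover have "1 \<le> card V" using finite_V V_nonempty by (simp add: Suc_le_eq card_gt_0_iff)
  ultimately show ?thesis
    using sum_down_degree(1)[of "edge_dist u"] unfolding genus_def num_edges_def by linarith
qed

text \<open>
  The divisor (in-degree of an acyclic orientation) - 1 of Baker and Norine: after any firing,
  the first vertex (in the orientation order) at which the firing script is maximal still has a
  negative coefficient.\<close>
lemma exists_non_eqe_deg_genus_minus_1: "\<exists>\<nu>. is_divisor V \<nu> \<and> deg V \<nu> = g - 1 \<and> \<not> eqe \<nu>"
proof -
  obtain idx :: "'a \<Rightarrow> nat" where idx: "inj_on idx V"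
    using finite_imp_inj_to_nat_seg[OF finite_V] by blast
  define \<nu> where "\<nu> x = (if x \<in> V then int (down_degree idx x) - 1 else 0)" for x
  have "deg V \<nu> = int (\<Sum>x\<in>V. down_degree idx x) - int (card V)"
    unfolding deg_def \<nu>_def by (simp add: sum_subtractf)
  also have "(\<Sum>x\<in>V. down_degree idx x) = (\<Sum>x\<in>V. \<Sum>y\<in>V. m x y) div 2"
    using sum_down_degree(2)[OF idx] by linarith
  finally have deg: "deg V \<nu> = g - 1" unfolding genus_def num_edges_def by simp
  have "\<not> eqe \<nu>"
  proof
    assume "eqe \<nu>"
    then obtain E f where E: "effective V E" and Ef: "\<forall>x. E x = \<nu> x + fire V m f x"
      unfolding equiv_effective_def lin_equiv_def by blast
    define A where "A = {x\<in>V. f x = Max (f ` V)}"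
    have f_le: "f x \<le> Max (f ` V)" if "x \<in> V" for x using finite_V that by simp
    have "Max (f ` V) \<in> f ` V" using finite_V V_nonempty by simp
    then have "A \<noteq> {}" "finite A" unfolding A_def using finite_V by auto
    then have "Min (idx ` A) \<in> idx ` A" by simp
    then obtain x0 where x0: "x0 \<in> A" and "idx x0 = Min (idx ` A)" by auto
    then have first: "\<forall>y\<in>A. idx x0 \<le> idx y" using \<open>finite A\<close> by simp
    have x0V: "x0 \<in> V" using x0 unfolding A_def by simp
    have "fire V m f x0 \<le> (\<Sum>y\<in>V. if idx y < idx x0 then - int (m x0 y) else 0)"
      unfolding fire_eq[OF x0V]
    proof (intro sum_mono)
      fix y assume y: "y \<in> V"
      show "int (m y x0) * (f y - f x0) \<le> (if idx y < idx x0 then - int (m x0 y) else 0)"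
      proof (cases "idx y < idx x0")
        case True
        then have "f y - f x0 \<le> -1"
          using first f_le[OF y] x0 y unfolding A_def by force
        then show ?thesis using True mult_left_mono[of _ "-1" "int (m y x0)"] by (simp add: mult_sym)
      next
        case False
        then show ?thesis using f_le[OF y] x0 unfolding A_def by (simp add: mult_nonneg_nonpos)
      qed
    qed
    also have "\<dots> = - int (down_degree idx x0)"
      unfolding down_degree_def by (simp add: sum_negf[symmetric] of_nat_sum if_distrib cong: if_cong)
    finally have "E x0 \<le> -1" using Ef x0V unfolding \<nu>_def by simp
    then show False using E x0V unfolding effective_def by force
  qed
  moreover have "is_divisor V \<nu>" unfolding is_divisor_def \<nu>_def by simp
  ultimately show ?thesis using deg by blast
qed

lemma rank_le_deg_minus_genus:
  assumes G: "is_divisor V G" and deg: "total_valence + g - 1 \<le> deg V G"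
  shows "rk G \<le> deg V G - g"
proof (rule ccontr)
  assume "\<not> rk G \<le> deg V G - g"
  then have "absorbs G (nat (deg V G - g + 1))"
    using le_rank_iff[of "deg V G - g + 1" G] deg total_valence_nonneg by simp
  obtain \<nu> where \<nu>: "is_divisor V \<nu>" "deg V \<nu> = g - 1" "\<not> eqe \<nu>"
    using exists_non_eqe_deg_genus_minus_1 by blast
  have "is_divisor V (\<lambda>x. G x - \<nu> x)" using G \<nu>(1) unfolding is_divisor_def by simp
  moreover have deg_diff_\<nu>: "deg V (\<lambda>x. G x - \<nu> x) = deg V G - g + 1" using \<nu>(2) by (simp add: deg_diff)
  ultimately obtain E where E: "effective V E" "lin_equiv V m (\<lambda>x. G x - \<nu> x) E"
    using eqe_if_deg_ge deg unfolding equiv_effective_def by fastforce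
  have "eqe (\<lambda>x. G x - E x)"
    using \<open>absorbs G _\<close> E deg_lin_equiv[OF E(2)] deg_diff_\<nu> deg total_valence_nonneg
    unfolding absorbs_def by simp
  moreover have "lin_equiv V m (\<lambda>x. E x + (\<nu> x - E x)) (\<lambda>x. (G x - \<nu> x) + (\<nu> x - E x))"
    by (rule lin_equiv_add[OF lin_equiv_sym[OF E(2)]])
  then have "lin_equiv V m \<nu> (\<lambda>x. G x - E x)" by simp
  ultimately show False using \<nu>(3) eqe_lin_equiv lin_equiv_sym by blast
qed

end

section \<open>Periodic permutations and their inversions\<close>

lemma dvd_abs_less_imp_eq_0: "(k::int) dvd x \<Longrightarrow> \<bar>x\<bar> < k \<Longrightarrow> x = 0"
  using dvd_imp_le_int[of x k] by fastforce

locale periodic_perm =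
  fixes tau :: "int \<Rightarrow> int" and k :: int
  assumes bij: "bij tau" and k_pos: "1 \<le> k" and periodic: "tau (b + j * k) = tau b + j * k"
begin

definition pos_low :: "int \<Rightarrow> int set" where
  "pos_low N = {b. 0 \<le> b \<and> tau b \<le> N}"

definition neg_high :: "int \<Rightarrow> int set" where
  "neg_high N = {b. b < 0 \<and> N < tau b}"

abbreviation inv_classes :: "(int \<times> int) set set" where
  "inv_classes \<equiv> inversions tau // k_equiv k (inversions tau)"

lemma tau_mod: "tau (b mod k) = tau b - b div k * k"
  using periodic[of b "- (b div k)"] by (simp add: minus_div_mult_eq_mod[symmetric])

lemma bounded_displacement: "\<exists>K. \<forall>b. \<bar>tau b - b\<bar> \<le> K"
proof -
  have "\<bar>tau b - b\<bar> \<le> Max ((\<lambda>r. \<bar>tau r - r\<bar>) ` {0..<k})" for b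
  proof -
    have "tau b - b = tau (b mod k) - b mod k"
      using tau_mod[of b] minus_div_mult_eq_mod[of b k] by linarith
    moreover have "b mod k \<in> {0..<k}" using k_pos by simp
    ultimately show ?thesis by simp
  qed
  then show ?thesis by blast
qed

lemma finite_pos_low: "finite (pos_low N)"
proof -
  obtain K where K: "\<forall>b. \<bar>tau b - b\<bar> \<le> K" using bounded_displacement by blast
  have "pos_low N \<subseteq> {0..N + K}"
  proof
    fix b assume "b \<in> pos_low N"
    with K[rule_format, of b] show "b \<in> {0..N + K}" unfolding pos_low_def by (auto simp: abs_le_iff)
  qed
  then show ?thesis using finite_subset by blast
qed

lemma finite_neg_high: "finite (neg_high N)"
proof -
  obtain K where K: "\<forall>b. \<bar>tau b - b\<bar> \<le> K" using bounded_displacement by blast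
  have "neg_high N \<subseteq> {N - K..0}"
  proof
    fix b assume "b \<in> neg_high N"
    with K[rule_format, of b] show "b \<in> {N - K..0}" unfolding neg_high_def by (auto simp: abs_le_iff)
  qed
  then show ?thesis using finite_subset by blast
qed

lemma neg_high_eventually_empty: "\<exists>K. \<forall>N\<ge>K. neg_high N = {}"
proof -
  obtain K where K: "\<forall>b. \<bar>tau b - b\<bar> \<le> K" using bounded_displacement by blast
  have "neg_high N = {}" if "K \<le> N" for N
  proof -
    have "\<not> (b < 0 \<and> N < tau b)" for b
      using K[rule_format, of b] that by (auto simp: abs_le_iff)
    then show ?thesis unfolding neg_high_def by auto
  qed
  then show ?thesis by blast
qed

text \<open>Raising N by one moves the unique preimage of N + 1 into pos_low or out of neg_high.\<close>
lemma card_flux_step: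
  "int (card (pos_low (N + 1))) - int (card (neg_high (N + 1)))
     = int (card (pos_low N)) - int (card (neg_high N)) + 1"
proof -
  obtain b0 where b0: "tau b0 = N + 1" and uniq: "\<And>b. tau b = N + 1 \<longleftrightarrow> b = b0"
    using bij by (metis bij_pointE)
  show ?thesis
  proof (cases "0 \<le> b0")
    case True
    have "pos_low (N + 1) = insert b0 (pos_low N)" "b0 \<notin> pos_low N"
      unfolding pos_low_def using True uniq b0 by force+
    moreover have "neg_high (N + 1) = neg_high N"
      unfolding neg_high_def
    proof (intro Collect_cong conj_cong refl)
      fix b :: int assume "b < 0"
      then have "tau b \<noteq> N + 1" using uniq True by auto
      then show "(N + 1 < tau b) = (N < tau b)" by auto
    qed
    ultimately show ?thesis using finite_pos_low by simp
  next
    case False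
    have "neg_high N = insert b0 (neg_high (N + 1))" "b0 \<notin> neg_high (N + 1)"
      unfolding neg_high_def using False uniq b0 by force+
    moreover have "pos_low (N + 1) = pos_low N"
      unfolding pos_low_def
    proof (intro Collect_cong conj_cong refl)
      fix b :: int assume "0 \<le> b"
      then have "tau b \<noteq> N + 1" using uniq False by auto
      then show "(tau b \<le> N + 1) = (tau b \<le> N)" by auto
    qed
    ultimately show ?thesis using finite_neg_high by simp
  qed
qed

lemma card_flux:
  "int (card (pos_low (int n))) - int (card (neg_high (int n)))
     = int (card (pos_low 0)) - int (card (neg_high 0)) + int n"
proof (induction n)
  case (Suc n)
  then show ?case using card_flux_step[of "int n"] by (simp add: add.commute)
qed simp

lemma card_le_card_inv_classes:
  assumes fin: "finite inv_classes" and S: "S \<subseteq> inversions tau"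
    and ineq: "\<And>p p'. p \<in> S \<Longrightarrow> p' \<in> S \<Longrightarrow> (p, p') \<in> k_equiv k (inversions tau) \<Longrightarrow> p = p'"
  shows "card S \<le> card inv_classes"
proof -
  let ?cls = "\<lambda>p. k_equiv k (inversions tau) `` {p}"
  have "?cls ` S \<subseteq> inv_classes" using S by (auto intro: quotientI)
  moreover have "inj_on ?cls S"
  proof (rule inj_onI)
    fix p p' assume p: "p \<in> S" "p' \<in> S" and "?cls p = ?cls p'"
    moreover have "(p', p') \<in> k_equiv k (inversions tau)" using p S unfolding k_equiv_def by auto
    ultimately show "p = p'" using ineq by blast
  qed
  ultimately show ?thesis using fin by (metis card_inj_on_le)
qed

lemma k_equivD:
  "(p, p') \<in> k_equiv k S \<Longrightarrow> fst p - fst p' = snd p - snd p' \<and> k dvd (fst p - fst p')"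
  unfolding k_equiv_def by auto

lemma card_product_le_card_inv_classes:
  assumes fin: "finite inv_classes" and narrow: "pos_low 0 \<subseteq> {0..<k} \<or> neg_high 0 \<subseteq> {-k..<0}"
  shows "card (pos_low 0) * card (neg_high 0) \<le> card inv_classes"
proof -
  have "card (neg_high 0 \<times> pos_low 0) \<le> card inv_classes"
  proof (rule card_le_card_inv_classes[OF fin])
    show "neg_high 0 \<times> pos_low 0 \<subseteq> inversions tau"
      unfolding pos_low_def neg_high_def inversions_def by auto
    fix p p' assume p: "p \<in> neg_high 0 \<times> pos_low 0" "p' \<in> neg_high 0 \<times> pos_low 0"
      and "(p, p') \<in> k_equiv k (inversions tau)"
    then have diff: "fst p - fst p' = snd p - snd p'" "k dvd fst p - fst p'"
      using k_equivD by blast+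
    from narrow have "\<bar>fst p - fst p'\<bar> < k"
    proof
      assume "pos_low 0 \<subseteq> {0..<k}"
      then have "snd p \<in> {0..<k}" "snd p' \<in> {0..<k}" using p by auto
      then show ?thesis using diff by auto
    next
      assume "neg_high 0 \<subseteq> {-k..<0}"
      then have "fst p \<in> {-k..<0}" "fst p' \<in> {-k..<0}" using p by auto
      then show ?thesis by auto
    qed
    then have "fst p - fst p' = 0" using diff(2) by (rule dvd_abs_less_imp_eq_0[rotated])
    then show "p = p'" using diff(1) by (simp add: prod_eq_iff)
  qed
  then show ?thesis by (simp add: card_cartesian_product mult.commute)
qed

text \<open>
  Given X, y \<in> [0, k) with \<tau> X > 2k and \<tau> y \<le> -k, each residue z \<notin> {X, y} supplies two
  inversions of the form (X, z + j k) or (z - j k, y) with j \<in> {1, 2} (as \<tau> X - \<tau> y > 3k), and y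
  supplies (X, y + j k) for j = 1, 2, 3; these 2k - 1 inversions are pairwise k-inequivalent.\<close>
definition witness :: "int \<Rightarrow> int \<Rightarrow> int \<times> int \<Rightarrow> int \<times> int" where
  "witness X y = (\<lambda>(z, j). if z = y then (X, y + j * k)
     else if j = 1 then (if tau z + k < tau X then (X, z + k) else (z - k, y))
     else if tau z + 2 * k < tau X then (X, z + 2 * k)
     else if tau z + k < tau X then (z - k, y) else (z - 2 * k, y))"

definition witness_index :: "int \<Rightarrow> int \<Rightarrow> (int \<times> int) set" where
  "witness_index X y = ({0..<k} - {X, y}) \<times> {1, 2} \<union> {y} \<times> {1, 2, 3}"

lemma card_witness_index:
  assumes "X \<in> {0..<k}" "y \<in> {0..<k}" "X \<noteq> y"
  shows "int (card (witness_index X y)) = 2 * k - 1"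
proof -
  have "({0..<k} - {X, y}) \<times> {1::int, 2} \<inter> {y} \<times> {1, 2, 3} = {}" by auto
  moreover have "int (card ({0..<k} - {X, y})) = k - 2"
    using assms by (simp add: card_Diff_subset) arith
  ultimately show ?thesis
    unfolding witness_index_def by (simp add: card_Un_disjoint card_cartesian_product)
qed

lemma inj_on_witness:
  assumes "X \<in> {0..<k}" "y \<in> {0..<k}" "X \<noteq> y"
  shows "inj_on (witness X y) (witness_index X y)"
proof (rule inj_onI)
  fix i i' assume "i \<in> witness_index X y" "i' \<in> witness_index X y" "witness X y i = witness X y i'"
  with assms show "i = i'"
    unfolding witness_index_def witness_def by (auto split: if_splits)
qed

lemma tau_shifts:
  "tau (z + k) = tau z + k" "tau (z + 2 * k) = tau z + 2 * k" "tau (z + 3 * k) = tau z + 3 * k"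
  "tau (z - k) = tau z - k" "tau (z - 2 * k) = tau z - 2 * k"
  using periodic[of z 1] periodic[of z 2] periodic[of z 3] periodic[of z "-1"] periodic[of z "-2"]
  by (simp_all add: algebra_simps)

lemma witness_in_inversions:
  assumes "X \<in> {0..<k}" "2 * k + 1 \<le> tau X" "y \<in> {0..<k}" "tau y \<le> - k"
    and "i \<in> witness_index X y"
  shows "witness X y i \<in> inversions tau"
  using assms k_pos unfolding witness_index_def witness_def inversions_def
  by (auto simp: tau_shifts split: if_splits)

lemma witness_shape:
  assumes "i \<in> witness_index X y"
  shows "fst (witness X y i) = X \<or> (snd (witness X y i) = y \<and> fst (witness X y i) mod k \<noteq> X)"
proof -
  have "(z - j * k) mod k = z" if "0 \<le> z" "z < k" for z j
    using that mod_mult_self1[of z "- j" k] by simp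
  from this[of _ 1] this[of _ 2] show ?thesis
    using assms unfolding witness_index_def witness_def by (auto split: if_splits)
qed

lemma witnesses_inequivalent:
  assumes X: "X \<in> {0..<k}" and "i \<in> witness_index X y" "i' \<in> witness_index X y"
    and "(witness X y i, witness X y i') \<in> k_equiv k (inversions tau)"
  shows "witness X y i = witness X y i'"
proof -
  have "X mod k = X" using X by simp
  then show ?thesis
    using witness_shape[OF assms(2)] witness_shape[OF assms(3)] k_equivD[OF assms(4)]
    by (auto simp: prod_eq_iff mod_eq_dvd_iff[symmetric])
qed

lemma card_inv_classes_ge_if_spread:
  assumes fin: "finite inv_classes"
    and X: "X \<in> {0..<k}" "2 * k + 1 \<le> tau X" and y: "y \<in> {0..<k}" "tau y \<le> - k"
  shows "2 * k - 1 \<le> int (card inv_classes)"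
proof -
  have "X \<noteq> y" using X y k_pos by auto
  have "card (witness X y ` witness_index X y) \<le> card inv_classes"
  proof (rule card_le_card_inv_classes[OF fin])
    show "witness X y ` witness_index X y \<subseteq> inversions tau"
      using witness_in_inversions[OF X y] by blast
    fix p p' assume "p \<in> witness X y ` witness_index X y" "p' \<in> witness X y ` witness_index X y"
      and "(p, p') \<in> k_equiv k (inversions tau)"
    then show "p = p'" using witnesses_inequivalent[OF X(1), of _ y] by blast
  qed
  moreover have "card (witness X y ` witness_index X y) = card (witness_index X y)"
    using inj_on_witness[OF X(1) y(1) \<open>X \<noteq> y\<close>] by (rule card_image)
  ultimately show ?thesis using card_witness_index[OF X(1) y(1) \<open>X \<noteq> y\<close>] by linarith
qed

lemma tau_mod_gt_if_neg_high: "q \<in> neg_high 0 \<Longrightarrow> q < - k \<Longrightarrow> 2 * k + 1 \<le> tau (q mod k)"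
proof -
  assume q: "q \<in> neg_high 0" "q < - k"
  have "q div k * k = q - q mod k" "0 \<le> q mod k"
    using k_pos by (simp_all add: minus_mod_eq_div_mult)
  then have "(q div k + 1) * k < 0" unfolding distrib_right using q(2) by linarith
  then have "q div k \<le> -2" using k_pos by (simp add: mult_less_0_iff)
  then have "q div k * k \<le> -2 * k" using k_pos by (intro mult_right_mono) auto
  then show ?thesis using q(1) unfolding neg_high_def by (simp add: tau_mod)
qed

lemma tau_mod_lt_if_pos_low: "p \<in> pos_low 0 \<Longrightarrow> k \<le> p \<Longrightarrow> tau (p mod k) \<le> - k"
proof -
  assume p: "p \<in> pos_low 0" "k \<le> p"
  have "p div k * k = p - p mod k" "p mod k < k"
    using k_pos by (simp_all add: minus_mod_eq_div_mult)
  then have "0 < p div k * k" using p(2) by linarith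
  then have "1 \<le> p div k" using k_pos by (simp add: zero_less_mult_iff)
  then have "1 * k \<le> p div k * k" using k_pos by (intro mult_right_mono) auto
  then show ?thesis using p(1) unfolding pos_low_def by (simp add: tau_mod)
qed

theorem card_pos_low_times_neg_high_le:
  assumes fin: "finite inv_classes" and G: "int (card inv_classes) \<le> G" and k: "G + 2 \<le> 2 * k"
  shows "int (card (pos_low 0) * card (neg_high 0)) \<le> G"
proof (cases "pos_low 0 \<subseteq> {0..<k} \<or> neg_high 0 \<subseteq> {-k..<0}")
  case True
  then have "int (card (pos_low 0) * card (neg_high 0)) \<le> int (card inv_classes)"
    using card_product_le_card_inv_classes[OF fin] by (simp only: of_nat_le_iff)
  then show ?thesis using G by linarith
next
  case False
  then obtain p q where p: "p \<in> pos_low 0" "p \<notin> {0..<k}" and q: "q \<in> neg_high 0" "q \<notin> {-k..<0}"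
    by blast
  then have "k \<le> p" "q < - k" unfolding pos_low_def neg_high_def by auto
  have "2 * k - 1 \<le> int (card inv_classes)"
    using card_inv_classes_ge_if_spread[OF fin _ tau_mod_gt_if_neg_high _ tau_mod_lt_if_pos_low]
      p(1) q(1) \<open>k \<le> p\<close> \<open>q < - k\<close>
      k_pos by simp
  then show ?thesis using G k by linarith
qed

end

section \<open>Rank arrays and transmission permutations\<close>

definition mixed_diff :: "(int \<Rightarrow> int \<Rightarrow> int) \<Rightarrow> int \<Rightarrow> int \<Rightarrow> int" where
  "mixed_diff R a b = R a b - R (a - 1) b - R a (b + 1) + R (a - 1) (b + 1)"

text \<open>R a b plays the role of r(D + a u - b v) for a divisor D of degree d.\<close>
locale rank_array =
  fixes R :: "int \<Rightarrow> int \<Rightarrow> int" and d k C :: int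
  assumes ge_minus1: "-1 \<le> R a b"
    and eq_minus1: "d + a - b < 0 \<Longrightarrow> R a b = -1"
    and step_b: "0 \<le> R a b - R a (b + 1)" "R a b - R a (b + 1) \<le> 1"
    and step_a: "0 \<le> R a b - R (a - 1) b" "R a b - R (a - 1) b \<le> 1"
    and mixed_diff_nonneg: "0 \<le> mixed_diff R a b"
    and shift_invariant: "R (a + k) (b + k) = R a b"
    and lower_bound: "d + a - b - C \<le> R a b"
    and upper_bound: "0 \<le> d + a - b \<Longrightarrow> R a b \<le> d + a - b"
    and k_pos: "1 \<le> k"
begin

definition jump :: "int \<Rightarrow> int \<Rightarrow> int" where
  "jump a b = R a b - R a (b + 1)"

lemma jump_cases: "jump a b = 0 \<or> jump a b = 1"
  using step_b[of a b] unfolding jump_def by auto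

lemma jump_le_1: "jump a b \<le> 1"
  using jump_cases[of a b] by auto

lemma jump_mono:
  assumes "a \<le> a'"
  shows "jump a b \<le> jump a' b"
proof -
  have "jump a b \<le> jump (a + int n) b" for n
  proof (induction n)
    case (Suc n)
    have "jump (a + int n) b \<le> jump (a + int (Suc n)) b"
      using mixed_diff_nonneg[of "a + int (Suc n)" b] unfolding jump_def mixed_diff_def by simp
    with Suc show ?case by linarith
  qed simp
  from this[of "nat (a' - a)"] show ?thesis using assms by simp
qed

lemma jump_eq_0_if_low: "a < b - d \<Longrightarrow> jump a b = 0"
  unfolding jump_def using eq_minus1 by simp

lemma shift_invariant_mult: "R (a + j * k) (b + j * k) = R a b"
proof -
  have nat_case: "R (a + int n * k) (b + int n * k) = R a b" for a b n
  proof (induction n)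
    case (Suc n)
    then show ?case
      using shift_invariant[of "a + int n * k" "b + int n * k"] by (simp add: algebra_simps)
  qed simp
  show ?thesis
  proof (cases "0 \<le> j")
    case True then show ?thesis using nat_case[of a "nat j" b] by simp
  next
    case False then show ?thesis
      using nat_case[of "a + j * k" "nat (- j)" "b + j * k"] by (simp add: algebra_simps)
  qed
qed

lemma jump_shift: "jump (a + j * k) (b + j * k) = jump a b"
  unfolding jump_def using shift_invariant_mult[of a j b] shift_invariant_mult[of a j "b + 1"]
  by (simp add: algebra_simps)

lemma R_diff_eq_sum_jump: "R a c - R a (c + int n) = (\<Sum>i\<in>{c..<c + int n}. jump a i)"
proof (induction n)
  case (Suc n)
  have "{c..<c + int (Suc n)} = insert (c + int n) {c..<c + int n}" by auto
  then show ?case using Suc unfolding jump_def by (simp add: algebra_simps)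
qed simp

lemma drop_over_period_le_if_no_jump:
  assumes no_jump: "\<forall>a. jump a b0 = 0"
  shows "R a c - R a (c + k) \<le> k - 1"
proof -
  define i0 where "i0 = c + (b0 - c) mod k"
  have i0: "i0 \<in> {c..<c + k}" unfolding i0_def using k_pos by simp
  define j where "j = - ((b0 - c) div k)"
  have "i0 = b0 + j * k"
    unfolding i0_def j_def using minus_div_mult_eq_mod[of "b0 - c" k] by linarith
  then have "jump a i0 = jump (a - j * k) b0"
    using jump_shift[of "a - j * k" j b0] by simp
  then have "jump a i0 = 0" using no_jump by simp
  have "R a c - R a (c + k) = (\<Sum>i\<in>{c..<c + k}. jump a i)"
    using R_diff_eq_sum_jump[of a c "nat k"] k_pos by simp
  also have "\<dots> = jump a i0 + (\<Sum>i\<in>{c..<c + k} - {i0}. jump a i)"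
    using i0 by (simp add: sum.remove)
  also have "\<dots> \<le> 0 + (\<Sum>i\<in>{c..<c + k} - {i0}. 1)"
    using \<open>jump a i0 = 0\<close> jump_le_1 by (intro add_mono sum_mono) simp_all
  also have "\<dots> = k - 1" using i0 k_pos by simp arith
  finally show ?thesis .
qed

text \<open>
  Without a jump in column b0, R would lose at most k - 1 per k columns, whereas the lower and
  upper bounds force a loss of about one per column.\<close>
lemma ex_jump: "\<exists>a. jump a b0 = 1"
proof (rule ccontr)
  assume "\<nexists>a. jump a b0 = 1"
  then have no_jump: "\<forall>a. jump a b0 = 0" using jump_cases by blast
  have total: "R a 0 - R a (int J * k) \<le> int J * (k - 1)" for a J
  proof (induction J)
    case (Suc J)
    then show ?case
      using drop_over_period_le_if_no_jump[OF no_jump, of a "int J * k"] by (simp add: algebra_simps)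
  qed simp
  define J where "J = nat C + 1"
  have "int J * k - C \<le> R (int J * k - d) 0" using lower_bound[of "int J * k - d" 0] by simp
  moreover have "R (int J * k - d) (int J * k) \<le> 0" using upper_bound[of "int J * k - d" "int J * k"] by simp
  ultimately have "int J \<le> C" using total[of "int J * k - d" J] by (simp add: algebra_simps)
  moreover have "0 \<le> C" using lower_bound[of 0 "d + 1"] eq_minus1[of 0 "d + 1"] by simp
  ultimately show False unfolding J_def by simp
qed

definition tau :: "int \<Rightarrow> int" where
  "tau b = (b - d) + int (LEAST n. jump (b - d + int n) b = 1)"

lemma jump_iff: "jump a b = 1 \<longleftrightarrow> tau b \<le> a"
proof -
  obtain a0 where a0: "jump a0 b = 1" using ex_jump by blast
  then have "b - d \<le> a0" using jump_eq_0_if_low[of a0 b] by linarith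
  then have "jump (b - d + int (nat (a0 - (b - d)))) b = 1" using a0 by simp
  then have tau: "jump (tau b) b = 1" unfolding tau_def by (rule LeastI)
  show ?thesis
  proof
    assume jump: "jump a b = 1"
    show "tau b \<le> a"
    proof (rule ccontr)
      assume "\<not> tau b \<le> a"
      moreover have "b - d \<le> a" using jump jump_eq_0_if_low[of a b] by linarith
      ultimately have "nat (a - (b - d)) < (LEAST n. jump (b - d + int n) b = 1)"
        unfolding tau_def by simp
      then have "jump (b - d + int (nat (a - (b - d)))) b \<noteq> 1" by (rule not_less_Least)
      then show False using jump \<open>b - d \<le> a\<close> by simp
    qed
  next
    assume "tau b \<le> a"
    then show "jump a b = 1" using jump_mono[of "tau b" a b] tau jump_cases[of a b] by simp
  qed
qed

lemma jump_eq: "jump a b = (if tau b \<le> a then 1 else 0)"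
  using jump_iff[of a b] jump_cases[of a b] by auto

lemma mixed_diff_eq: "mixed_diff R a b = (if a = tau b then 1 else 0)"
proof -
  have "mixed_diff R a b = jump a b - jump (a - 1) b" unfolding mixed_diff_def jump_def by simp
  then show ?thesis using jump_eq[of a b] jump_eq[of "a - 1" b] by auto
qed

lemma tau_shift: "tau (b + j * k) = tau b + j * k"
proof -
  have "tau (b + j * k) \<le> a \<longleftrightarrow> tau b + j * k \<le> a" for a
    using jump_iff[of a "b + j * k"] jump_iff[of "a - j * k" b] jump_shift[of "a - j * k" j b]
    by auto
  then show ?thesis by (meson order_refl order_antisym)
qed

lemma rank_count: "R N 0 + 1 = int (card {b. 0 \<le> b \<and> tau b \<le> N})"
proof -
  define n where "n = nat (d + N + 1)"
  have "R N 0 + 1 = R N 0 - R N (0 + int n)" using eq_minus1[of N "int n"] unfolding n_def by simp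
  also have "\<dots> = (\<Sum>i\<in>{0..<int n}. if tau i \<le> N then 1 else 0)"
    using R_diff_eq_sum_jump[of N 0 n] jump_eq by simp
  also have "\<dots> = int (card ({0..<int n} \<inter> {i. tau i \<le> N}))"
    by (simp add: sum.If_cases)
  also have "{0..<int n} \<inter> {i. tau i \<le> N} = {b. 0 \<le> b \<and> tau b \<le> N}"
  proof (intro set_eqI iffI)
    fix b assume b: "b \<in> {b. 0 \<le> b \<and> tau b \<le> N}"
    then have "0 \<le> R N b" using jump_iff[of N b] ge_minus1[of N "b + 1"] unfolding jump_def by simp
    then have "b - N \<le> d" using eq_minus1[of N b] by (cases "d + N - b < 0") auto
    then show "b \<in> {0..<int n} \<inter> {i. tau i \<le> N}" using b unfolding n_def by auto
  qed auto
  finally show ?thesis .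
qed

end

lemma rank_array_transpose: "rank_array R d k C \<Longrightarrow> rank_array (\<lambda>a b. R (- b) (- a)) d k C"
proof -
  assume "rank_array R d k C"
  then interpret rank_array R d k C .
  show ?thesis
  proof
    fix a b
    show "-1 \<le> R (- b) (- a)" by (rule ge_minus1)
    show "d + a - b < 0 \<Longrightarrow> R (- b) (- a) = -1" using eq_minus1[of "-b" "-a"] by simp
    show "0 \<le> R (- b) (- a) - R (- (b + 1)) (- a)" "R (- b) (- a) - R (- (b + 1)) (- a) \<le> 1"
      using step_a[of "-b" "-a"] by simp_all
    show "0 \<le> R (- b) (- a) - R (- b) (- (a - 1))" "R (- b) (- a) - R (- b) (- (a - 1)) \<le> 1"
      using step_b[of "-b" "-a"] by simp_all
    show "0 \<le> mixed_diff (\<lambda>a b. R (- b) (- a)) a b"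
      using mixed_diff_nonneg[of "-b" "-a"] unfolding mixed_diff_def by simp
    show "R (- (b + k)) (- (a + k)) = R (- b) (- a)"
      using shift_invariant_mult[of "-b" "-1" "-a"] by (simp add: algebra_simps)
    show "d + a - b - C \<le> R (- b) (- a)" using lower_bound[of "-b" "-a"] by simp
    show "0 \<le> d + a - b \<Longrightarrow> R (- b) (- a) \<le> d + a - b" using upper_bound[of "-b" "-a"] by simp
  qed (rule k_pos)
qed

context rank_array
begin

lemma bij_tau: "bij tau"
proof -
  interpret transposed: rank_array "\<lambda>a b. R (- b) (- a)" d k C
    by (rule rank_array_transpose) (rule rank_array_axioms)
  have transpose: "mixed_diff R a b = mixed_diff (\<lambda>a b. R (- b) (- a)) (- b) (- a)" for a b
    unfolding mixed_diff_def by (simp add: algebra_simps)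
  have "a = tau b \<longleftrightarrow> b = - transposed.tau (- a)" for a b
    using mixed_diff_eq[of a b] transposed.mixed_diff_eq[of "- b" "- a"] transpose[of a b]
    by (auto split: if_splits)
  then have "tau (- transposed.tau (- a)) = a" "- transposed.tau (- tau b) = b" for a b
    by metis+
  then show ?thesis by (metis bijI' )
qed

sublocale periodic_perm tau k
  using bij_tau k_pos tau_shift by unfold_locales

lemma card_neg_high_ge:
  assumes upper: "\<And>N. M \<le> N \<Longrightarrow> R N 0 \<le> d + N - g"
  shows "R 0 0 + g - d \<le> int (card (neg_high 0))"
proof -
  obtain K where K: "\<forall>N\<ge>K. neg_high N = {}" using neg_high_eventually_empty by blast
  define n where "n = nat (max 0 (max K M))"
  have "R (int n) 0 + 1 = int (card (pos_low (int n)))" "R 0 0 + 1 = int (card (pos_low 0))"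
    using rank_count unfolding pos_low_def by simp_all
  moreover have "neg_high (int n) = {}" using K unfolding n_def by simp
  moreover have "R (int n) 0 \<le> d + int n - g" using upper unfolding n_def by simp
  ultimately show ?thesis using card_flux[of n] by simp
qed

end

section \<open>Twists of a divisor\<close>

lemma twist_twist: "twist (twist D u a v b) u a' v b' = twist D u (a + a') v (b + b')"
  unfolding twist_def by (auto simp: fun_eq_iff)

context multigraph
begin

lemma is_divisor_twist: "u \<in> V \<Longrightarrow> v \<in> V \<Longrightarrow> is_divisor V D \<Longrightarrow> is_divisor V (twist D u a v b)"
  unfolding is_divisor_def twist_def by auto

lemma deg_twist: "u \<in> V \<Longrightarrow> v \<in> V \<Longrightarrow> deg V (twist D u a v b) = deg V D + a + b"
  unfolding deg_def twist_def using finite_V by (simp add: sum.distrib)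

lemma twist_minus_point:
  "twist D u (a - 1) v b = (\<lambda>x. twist D u a v b x - point u 1 x)"
  "twist D u a v (b - 1) = (\<lambda>x. twist D u a v b x - point v 1 x)"
  unfolding twist_def point_def by (auto simp: fun_eq_iff)

lemma Delta_twist:
  "Delta V m u v (twist D u a v (- b)) = mixed_diff (\<lambda>a b. rk (twist D u a v (- b))) a b"
  unfolding Delta_def mixed_diff_def twist_twist by (simp add: algebra_simps)

lemma rank_array_twists:
  assumes u: "u \<in> V" and v: "v \<in> V" and D: "is_divisor V D" and k: "1 \<le> k"
    and equiv: "lin_equiv V m (\<lambda>x. if x = u then k else 0) (\<lambda>x. if x = v then k else 0)"
    and submod: "submodular V m u v D"
  shows "rank_array (\<lambda>a b. rk (twist D u a v (- b))) (deg V D) k total_valence"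
proof
  fix a b
  let ?T = "twist D u a v (- b)"
  have deg: "deg V ?T = deg V D + a - b" using deg_twist[OF u v] by simp
  show "-1 \<le> rk ?T" by (rule rank_ge_minus1)
  show "deg V D + a - b < 0 \<Longrightarrow> rk ?T = -1" using deg rank_eq_minus1_if_deg_neg by simp
  show "0 \<le> rk ?T - rk (twist D u a v (- (b + 1)))" "rk ?T - rk (twist D u a v (- (b + 1))) \<le> 1"
    using rank_minus_point[OF v, of ?T] twist_minus_point(2)[of D u a v "- b"] by simp_all
  show "0 \<le> rk ?T - rk (twist D u (a - 1) v (- b))" "rk ?T - rk (twist D u (a - 1) v (- b)) \<le> 1"
    using rank_minus_point[OF u, of ?T] twist_minus_point(1)[of D u a v "- b"] by simp_all
  show "0 \<le> mixed_diff (\<lambda>a b. rk (twist D u a v (- b))) a b"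
    using submod Delta_twist unfolding submodular_def by metis
  have "lin_equiv V m (\<lambda>x. (if x = v then k else 0) + twist D u a v (- b - k) x)
                      (\<lambda>x. (if x = u then k else 0) + twist D u a v (- b - k) x)"
    by (rule lin_equiv_add[OF lin_equiv_sym[OF equiv]])
  moreover have "(\<lambda>x. (if x = v then k else 0) + twist D u a v (- b - k) x) = ?T"
    unfolding twist_def by (auto simp: fun_eq_iff)
  moreover have "(\<lambda>x. (if x = u then k else 0) + twist D u a v (- b - k) x) = twist D u (a + k) v (- (b + k))"
    unfolding twist_def by (auto simp: fun_eq_iff)
  ultimately show "rk (twist D u (a + k) v (- (b + k))) = rk ?T"
    using rank_lin_equiv by metis
  show "deg V D + a - b - total_valence \<le> rk ?T"
    using rank_ge_deg_minus_total_valence[OF is_divisor_twist[OF u v D, of a "- b"]] deg by linarith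
  show "0 \<le> deg V D + a - b \<Longrightarrow> rk ?T \<le> deg V D + a - b"
    using rank_le_deg[of ?T] deg by simp
qed (rule k)

lemma transmission_eq_tau:
  assumes "rank_array (\<lambda>a b. rk (twist D u a v (- b))) (deg V D) k total_valence"
  shows "transmission V m u v D = rank_array.tau (\<lambda>a b. rk (twist D u a v (- b))) (deg V D)"
proof -
  interpret rank_array "\<lambda>a b. rk (twist D u a v (- b))" "deg V D" k total_valence by (rule assms)
  show ?thesis
    unfolding transmission_def
  proof (rule the_equality)
    show "bij tau \<and> (\<forall>a b. (if tau b = a then 1 else 0) = Delta V m u v (twist D u a v (- b)))"
      using bij_tau mixed_diff_eq Delta_twist by auto
  next
    fix \<tau> assume \<tau>: "bij \<tau> \<and> (\<forall>a b. (if \<tau> b = a then 1 else 0) = Delta V m u v (twist D u a v (- b)))"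
    have "\<tau> b = tau b" for b
    proof -
      have "Delta V m u v (twist D u (\<tau> b) v (- b)) = 1" using \<tau> by (metis (full_types))
      then show ?thesis using mixed_diff_eq[of "\<tau> b" b] Delta_twist[of u v D "\<tau> b" b]
        by (simp split: if_splits)
    qed
    then show "\<tau> = tau" by blast
  qed
qed

lemma brill_noether_bound:
  assumes u: "u \<in> V" and v: "v \<in> V" and transmission: "k_general_transmission V m u v k"
    and k: "g + 2 \<le> 2 * int k" and D: "is_divisor V D"
  shows "(rk D + 1) * (g - deg V D + rk D) \<le> g"
proof -
  let ?R = "\<lambda>a b. rk (twist D u a v (- b))"
  have "1 \<le> int k" using k genus_nonneg by simp
  moreover have "lin_equiv V m (\<lambda>x. if x = u then int k else 0) (\<lambda>x. if x = v then int k else 0)"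
    and "submodular V m u v D"
    using transmission D unfolding k_general_transmission_def by auto
  ultimately interpret rank_array ?R "deg V D" "int k" total_valence
    by (rule rank_array_twists[OF u v D])
  have "inv_k (int k) (transmission V m u v D) \<le> enat (nat g)"
    using transmission D unfolding k_general_transmission_def by blast
  then have "inv_k (int k) tau \<le> enat (nat g)"
    unfolding transmission_eq_tau[OF rank_array_axioms] .
  then have fin: "finite inv_classes" and card: "int (card inv_classes) \<le> g"
    using genus_nonneg unfolding inv_k_def Let_def by (auto split: if_splits)
  have R00: "?R 0 0 = rk D" by (simp add: twist_def)
  have P: "rk D + 1 = int (card (pos_low 0))" using rank_count[of 0] R00 unfolding pos_low_def by simp
  have Q: "rk D + g - deg V D \<le> int (card (neg_high 0))"
  proof (rule card_neg_high_ge[of "total_valence + g - 1 - deg V D" g, unfolded R00])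
    fix N assume "total_valence + g - 1 - deg V D \<le> N"
    then show "?R N 0 \<le> deg V D + N - g"
      using rank_le_deg_minus_genus[OF is_divisor_twist[OF u v D, of N 0]] deg_twist[OF u v, of D N 0]
      by simp
  qed
  have PQ: "int (card (pos_low 0)) * int (card (neg_high 0)) \<le> g"
    using card_pos_low_times_neg_high_le[OF fin card k] by simp
  show ?thesis
  proof (cases "g - deg V D + rk D \<le> 0")
    case True
    then have "(rk D + 1) * (g - deg V D + rk D) \<le> 0"
      using rank_ge_minus1[of D] by (intro mult_nonneg_nonpos) simp_all
    then show ?thesis using genus_nonneg by linarith
  next
    case False
    then have "(rk D + 1) * (g - deg V D + rk D) \<le> int (card (pos_low 0)) * int (card (neg_high 0))"
      using P Q by (intro mult_mono) simp_all
    then show ?thesis using PQ by linarith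
  qed
qed

end

theorem mainTheorem8:
  fixes V :: "'a set" and m :: "'a \<Rightarrow> 'a \<Rightarrow> nat" and u v :: 'a and k :: nat
  assumes "is_graph V m"
    and "u \<in> V" and "v \<in> V" and "u \<noteq> v"
    and "k_general_transmission V m u v k"
    and "real k \<ge> real_of_int (genus V m) / 2 + 1"
  shows "BN_general V m"
proof -
  interpret multigraph V m by (rule multigraph.intro) fact
  have k: "g + 2 \<le> 2 * int k" using assms(6) by linarith
  show ?thesis
    unfolding BN_general_def
  proof (intro allI impI)
    fix D r assume D: "is_divisor V D" and r: "0 \<le> r \<and> r \<le> rk D"
    have "(r + 1) * (g - deg V D + r) \<le> max 0 ((rk D + 1) * (g - deg V D + rk D))"
    proof (cases "g - deg V D + r \<le> 0")
      case True
      then have "(r + 1) * (g - deg V D + r) \<le> 0" using r by (intro mult_nonneg_nonpos) simp_all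
      then show ?thesis by simp
    next
      case False
      then have "(r + 1) * (g - deg V D + r) \<le> (rk D + 1) * (g - deg V D + rk D)"
        using r by (intro mult_mono) simp_all
      then show ?thesis by simp
    qed
    then show "0 \<le> g - (r + 1) * (g - deg V D + r)"
      using brill_noether_bound[OF assms(2,3,5) k D] genus_nonneg by linarith
  qed
qed

end
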